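(* Let $(\mathfrak{g},[\cdot,\cdot],\langle\cdot,\cdot\rangle)$ be a nilpotent quadratic Lie algebra of dimension $n$. If $\mathfrak{g}$ admits an $(n-1)$-symplectic structure, then $\mathfrak{g}$ is abelian.
   Context: A quadratic Lie algebra is a finite-dimensional real Lie algebra $\mathfrak{g}$ endowed with a nondegenerate symmetric bilinear form $\langle\cdot,\cdot\rangle$ which is invariant: $\langle [u,v],w\rangle+\langle [u,w],v\rangle=0$ for all $u,v,w\in\mathfrak{g}$. A $k$-symplectic structure on a real Lie algebra $\mathfrak{g}$ of dimension $m(k+1)$ ($m,k\ge1$) is a pair consisting of a Lie subalgebra $\mathfrak{h}\subset\mathfrak{g}$ of dimension $mk$ and a family $(\theta_1,\dots,\theta_k)$ of skew-symmetric bilinear forms on $\mathfrak{g}$ such that: (i) $\bigcap_{i=1}^k\ker\theta_i=\{0\}$, where $\ker\theta_i=\{u\in\mathfrak{g}:\theta_i(u,v)=0\ \forall v\in\mathfrak{g}\}$; (ii) each $\theta_i$ is a 2-cocycle: $\theta_i([u,v],w)+\theta_i([v,w],u)+\theta_i([w,u],v)=0$ for all $u,v,w$; (iii) $\theta_i(u,v)=0$ for all $u,v\in\mathfrak{h}$ and all $i$. (Thus an $(n-1)$-symplectic structure on an $n$-dimensional Lie algebra has $\dim\mathfrak{h}=n-1$.) *)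

theory Defs
  imports "HOL-Analysis.Analysis"
begin

text \<open>A finite-dimensional real Lie algebra is modelled as a type of class
  euclidean_space (i.e. a finite-dimensional real vector space; its inner
  product plays no role) together with a bracket.\<close>

definition lie_algebra :: "('a::euclidean_space \<Rightarrow> 'a \<Rightarrow> 'a) \<Rightarrow> bool" where
  "lie_algebra br \<longleftrightarrow> bilinear br \<and> (\<forall>x. br x x = 0) \<and>
     (\<forall>x y z. br x (br y z) + br y (br z x) + br z (br x y) = 0)"

fun lower_central :: "('a::euclidean_space \<Rightarrow> 'a \<Rightarrow> 'a) \<Rightarrow> nat \<Rightarrow> 'a set" where
  "lower_central br 0 = UNIV"
| "lower_central br (Suc k) = span {br x y | x y. y \<in> lower_central br k}"

definition nilpotent_lie :: "('a::euclidean_space \<Rightarrow> 'a \<Rightarrow> 'a) \<Rightarrow> bool" where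
  "nilpotent_lie br \<longleftrightarrow> (\<exists>k. lower_central br k = {0})"

definition abelian_lie :: "('a::euclidean_space \<Rightarrow> 'a \<Rightarrow> 'a) \<Rightarrow> bool" where
  "abelian_lie br \<longleftrightarrow> (\<forall>x y. br x y = 0)"

definition quadratic_lie ::
  "('a::euclidean_space \<Rightarrow> 'a \<Rightarrow> 'a) \<Rightarrow> ('a \<Rightarrow> 'a \<Rightarrow> real) \<Rightarrow> bool" where
  "quadratic_lie br B \<longleftrightarrow> lie_algebra br \<and> bilinear B \<and> (\<forall>u v. B u v = B v u) \<and>
     (\<forall>u. (\<forall>v. B u v = 0) \<longrightarrow> u = 0) \<and>
     (\<forall>u v w. B (br u v) w + B (br u w) v = 0)"

definition lie_subalgebra :: "('a::euclidean_space \<Rightarrow> 'a \<Rightarrow> 'a) \<Rightarrow> 'a set \<Rightarrow> bool" where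
  "lie_subalgebra br h \<longleftrightarrow> subspace h \<and> (\<forall>u\<in>h. \<forall>v\<in>h. br u v \<in> h)"

definition form_kernel :: "('a \<Rightarrow> 'a \<Rightarrow> real) \<Rightarrow> 'a set" where
  "form_kernel \<theta> = {u. \<forall>v. \<theta> u v = 0}"

definition k_symplectic_structure ::
  "('a::euclidean_space \<Rightarrow> 'a \<Rightarrow> 'a) \<Rightarrow> nat \<Rightarrow> 'a set \<Rightarrow> (nat \<Rightarrow> 'a \<Rightarrow> 'a \<Rightarrow> real) \<Rightarrow> bool" where
  "k_symplectic_structure br k h \<theta> \<longleftrightarrow>
     (\<exists>m. m \<ge> 1 \<and> k \<ge> 1 \<and> DIM('a) = m * (k + 1) \<and>
        lie_subalgebra br h \<and> dim h = m * k \<and>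
        (\<forall>i\<in>{1..k}. bilinear (\<theta> i) \<and> (\<forall>u v. \<theta> i u v = - \<theta> i v u)) \<and>
        (\<Inter>i\<in>{1..k}. form_kernel (\<theta> i)) = {0} \<and>
        (\<forall>i\<in>{1..k}. \<forall>u v w.
            \<theta> i (br u v) w + \<theta> i (br v w) u + \<theta> i (br w u) v = 0) \<and>
        (\<forall>i\<in>{1..k}. \<forall>u\<in>h. \<forall>v\<in>h. \<theta> i u v = 0))"

definition admits_k_symplectic :: "('a::euclidean_space \<Rightarrow> 'a \<Rightarrow> 'a) \<Rightarrow> nat \<Rightarrow> bool" where
  "admits_k_symplectic br k \<longleftrightarrow> (\<exists>h \<theta>. k_symplectic_structure br k h \<theta>)"

end

theory Submission
  imports Defs
begin

text \<open>For n = dim g the subalgebra h is a hyperplane, g = \<real>e \<oplus> h; let \<alpha>(x) be the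
  e-coefficient of [e,x]. Each \<theta>_i vanishes on h \<times> h, so the cocycle identity for u, v \<in> h
  and e puts [u,v] - \<alpha>(u)v + \<alpha>(v)u into every ker \<theta>_i, whence [u,v] = \<alpha>(u)v - \<alpha>(v)u.
  Then [u,v] is an eigenvector of ad u or ad v with nonzero eigenvalue unless [u,v] = 0,
  which nilpotency forbids; so h is abelian. In a quadratic Lie algebra this makes
  [g,g] orthogonal to e, and invariance gives \<langle>[e,w],z\<rangle> = \<langle>[w,z],e\<rangle> = 0, so e is
  central and g is abelian.\<close>

lemma lie_algebra_skew:
  assumes "lie_algebra br"
  shows "br x y = - br y x"
proof -
  have bil: "bilinear br" and alt: "\<And>x. br x x = 0"
    using assms unfolding lie_algebra_def by auto
  have "br (x + y) (x + y) = br x x + br x y + br y x + br y y"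
    using bil by (simp add: bilinear_ladd bilinear_radd)
  then show ?thesis
    using alt by (simp add: eq_neg_iff_add_eq_0)
qed

lemma quadratic_lie_cyclic:
  assumes "quadratic_lie br B"
  shows "B (br a b) c = B (br b c) a"
proof -
  have lie: "lie_algebra br" and bilB: "bilinear B"
    and inv: "\<And>u v w. B (br u v) w + B (br u w) v = 0"
    using assms unfolding quadratic_lie_def by auto
  have "B (br a b) c = - B (br a c) b"
    using inv[of a b c] by linarith
  also have "\<dots> = B (br c a) b"
    using lie_algebra_skew[OF lie, of a c] bilB by (simp add: bilinear_lneg)
  also have "\<dots> = - B (br c b) a"
    using inv[of c a b] by linarith
  also have "\<dots> = B (br b c) a"
    using lie_algebra_skew[OF lie, of c b] bilB by (simp add: bilinear_lneg)
  finally show ?thesis .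
qed

lemma lie_bracket_split:
  assumes "lie_algebra br"
  shows "br (a *\<^sub>R e + p) (b *\<^sub>R e + q) = a *\<^sub>R br e q - b *\<^sub>R br e p + br p q"
proof -
  have bil: "bilinear br" and alt: "br e e = 0"
    using assms unfolding lie_algebra_def by auto
  have "br (a *\<^sub>R e + p) (b *\<^sub>R e + q)
      = (a * b) *\<^sub>R br e e + a *\<^sub>R br e q + b *\<^sub>R br p e + br p q"
    using bil by (simp add: bilinear_ladd bilinear_radd bilinear_lmul bilinear_rmul algebra_simps)
  then show ?thesis
    using alt lie_algebra_skew[OF assms, of p e] by simp
qed

lemma nilpotent_lie_eigenvalue_zero:
  assumes "nilpotent_lie br" and "br a x = c *\<^sub>R x" and "c \<noteq> 0"
  shows "x = 0"
proof -
  obtain N where N: "lower_central br N = {0}"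
    using assms(1) unfolding nilpotent_lie_def by blast
  have "x \<in> lower_central br j" for j
  proof (induction j)
    case 0
    then show ?case by simp
  next
    case (Suc j)
    then have "br a x \<in> lower_central br (Suc j)"
      by (auto intro: span_base)
    then have "(1 / c) *\<^sub>R br a x \<in> lower_central br (Suc j)"
      by (simp add: span_mul)
    then show ?case
      using assms(2,3) by simp
  qed
  then show ?thesis
    using N by blast
qed

lemma nilpotent_lie_bracket_in_span_zero:
  assumes "lie_algebra br" and "nilpotent_lie br"
    and uv: "br u v = a *\<^sub>R u + b *\<^sub>R v"
  shows "br u v = 0"
proof (rule ccontr)
  assume ne: "br u v \<noteq> 0"
  have bil: "bilinear br" and alt: "\<And>x. br x x = 0"
    using assms(1) unfolding lie_algebra_def by auto
  have u_eigen: "br u (br u v) = b *\<^sub>R br u v"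
    using uv alt bil by (simp add: bilinear_radd bilinear_rmul)
  have "br v (br u v) = a *\<^sub>R br v u"
    using uv alt bil by (simp add: bilinear_radd bilinear_rmul)
  then have v_eigen: "br v (br u v) = (- a) *\<^sub>R br u v"
    using lie_algebra_skew[OF assms(1), of v u] by simp
  have "a \<noteq> 0 \<or> b \<noteq> 0"
    using uv ne by auto
  then show False
    using nilpotent_lie_eigenvalue_zero[OF assms(2) u_eigen]
      nilpotent_lie_eigenvalue_zero[OF assms(2) v_eigen] ne by auto
qed

lemma hyperplane_coordinate:
  fixes h :: "'a::euclidean_space set"
  assumes "subspace h" and "dim h + 1 = DIM('a)"
  obtains e and c :: "'a \<Rightarrow> real" where "\<And>x. x - c x *\<^sub>R e \<in> h"
proof -
  have span_h: "span h = h"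
    using assms(1) by (metis span_eq_iff)
  have "h \<noteq> UNIV"
    using assms(2) dim_UNIV[where 'a='a] by auto
  then obtain e where e: "e \<notin> h"
    by blast
  have "dim (insert e h) = DIM('a)"
    using assms(2) e span_h by (simp add: dim_insert del: span_eq_iff)
  then have "span (insert e h) = UNIV"
    using dim_eq_full by blast
  then have "\<forall>x. \<exists>c. x - c *\<^sub>R e \<in> h"
    using span_breakdown_eq[of _ e h] span_h by auto
  then show ?thesis
    using that by metis
qed

lemma bilinear_vanishing_on_hyperplane:
  fixes t :: "'a::real_vector \<Rightarrow> 'a \<Rightarrow> real"
  assumes "bilinear t" and "\<forall>a\<in>h. \<forall>b\<in>h. t a b = 0"
    and "y - c *\<^sub>R e \<in> h" and "z \<in> h"
  shows "t y z = c * t e z"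
proof -
  have "t (c *\<^sub>R e + d) z = c * t e z + t d z" for d
    using assms(1) by (simp add: bilinear_ladd bilinear_lmul)
  from this[of "y - c *\<^sub>R e"] show ?thesis
    using assms(2-4) by simp
qed

lemma symplectic_forms_bracket_on_hyperplane:
  assumes lie: "lie_algebra br" and sub: "lie_subalgebra br h"
    and coord: "\<And>x. x - c x *\<^sub>R e \<in> h"
    and forms: "\<And>i. i \<in> I \<Longrightarrow> bilinear (\<theta> i) \<and> (\<forall>u v. \<theta> i u v = - \<theta> i v u)"
    and cocycle: "\<And>i u v w. i \<in> I \<Longrightarrow>
        \<theta> i (br u v) w + \<theta> i (br v w) u + \<theta> i (br w u) v = 0"
    and vanish: "\<And>i. i \<in> I \<Longrightarrow> \<forall>u\<in>h. \<forall>v\<in>h. \<theta> i u v = 0"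
    and kernels: "(\<Inter>i\<in>I. form_kernel (\<theta> i)) = {0}"
    and u: "u \<in> h" and v: "v \<in> h"
  shows "br u v = c (br e u) *\<^sub>R v - c (br e v) *\<^sub>R u"
proof -
  define w where "w = br u v - c (br e u) *\<^sub>R v + c (br e v) *\<^sub>R u"
  have "subspace h" and "br u v \<in> h"
    using sub u v unfolding lie_subalgebra_def by auto
  then have w_h: "w \<in> h"
    unfolding w_def using u v by (simp add: subspace_add subspace_diff subspace_mul)
  have "w \<in> form_kernel (\<theta> i)" if i: "i \<in> I" for i
  proof -
    let ?t = "\<theta> i"
    have bil: "bilinear ?t" and skew: "\<And>a b. ?t a b = - ?t b a"
      using forms[OF i] by blast+
    note on_h = bilinear_vanishing_on_hyperplane[OF bil vanish[OF i] coord]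
    have "?t (br v e) u = - (c (br e v) * ?t e u)"
      using lie_algebra_skew[OF lie, of v e] on_h[OF u, of "br e v"] bil
      by (simp add: bilinear_lneg)
    moreover have "?t (br e u) v = c (br e u) * ?t e v"
      using on_h[OF v] .
    moreover have "?t (br u v) e = - ?t e (br u v)"
      using skew .
    ultimately have "?t e w = 0"
      unfolding w_def using bil cocycle[OF i, of u v e]
      by (simp add: bilinear_radd bilinear_rsub bilinear_rmul)
    then have "?t z w = 0" for z
      using on_h[OF w_h, of z] by simp
    then have "?t w z = 0" for z
      using skew[of w z] by simp
    then show ?thesis
      unfolding form_kernel_def by simp
  qed
  then have "w = 0"
    using kernels by blast
  then show ?thesis
    unfolding w_def by (simp add: algebra_simps)
qed

lemma quadratic_lie_abelian_hyperplane:
  assumes quad: "quadratic_lie br B"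
    and coord: "\<And>x. x - c x *\<^sub>R e \<in> h"
    and abelian_h: "\<forall>u\<in>h. \<forall>v\<in>h. br u v = 0"
  shows "abelian_lie br"
proof -
  have lie: "lie_algebra br" and bilB: "bilinear B"
    and nondeg: "\<And>u. (\<forall>v. B u v = 0) \<Longrightarrow> u = 0"
    and inv: "\<And>u v w. B (br u v) w + B (br u w) v = 0"
    using quad unfolding quadratic_lie_def by auto
  have alt: "br e e = 0"
    using lie unfolding lie_algebra_def by auto
  have bracket: "br x y = c x *\<^sub>R br e (y - c y *\<^sub>R e) - c y *\<^sub>R br e (x - c x *\<^sub>R e)" for x y
    using lie_bracket_split[OF lie, of "c x" e "x - c x *\<^sub>R e" "c y" "y - c y *\<^sub>R e"]
      abelian_h coord by simp
  have "B (br e v) e = 0" for v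
    using inv[of e v e] alt bilB by (simp add: bilinear_lzero)
  then have orth_e: "B (br x y) e = 0" for x y
    using bracket[of x y] bilB by (simp add: bilinear_lsub bilinear_lmul)
  have central_e: "br e w = 0" for w
    using nondeg quadratic_lie_cyclic[OF quad, of e w] orth_e by simp
  show ?thesis
    unfolding abelian_lie_def using bracket central_e by simp
qed

lemma codim_one_symplectic_hyperplane:
  fixes br :: "'a::euclidean_space \<Rightarrow> 'a \<Rightarrow> 'a"
  assumes "k_symplectic_structure br (DIM('a) - 1) h \<theta>"
  shows "dim h + 1 = DIM('a)"
proof -
  obtain m where "DIM('a) = m * (DIM('a) - 1 + 1)" and "dim h = m * (DIM('a) - 1)"
    using assms unfolding k_symplectic_structure_def by blast
  then have "m = 1"
    by simp
  with \<open>dim h = m * (DIM('a) - 1)\<close> show ?thesis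
    by simp
qed

theorem mainTheorem3:
  fixes br :: "'a::euclidean_space \<Rightarrow> 'a \<Rightarrow> 'a"
    and B :: "'a \<Rightarrow> 'a \<Rightarrow> real"
  assumes "quadratic_lie br B"
    and "nilpotent_lie br"
    and "admits_k_symplectic br (DIM('a) - 1)"
  shows "abelian_lie br"
proof -
  obtain h \<theta> where S: "k_symplectic_structure br (DIM('a) - 1) h \<theta>"
    using assms(3) unfolding admits_k_symplectic_def by blast
  then have sub: "lie_subalgebra br h"
    and forms: "\<forall>i\<in>{1..DIM('a) - 1}. bilinear (\<theta> i) \<and> (\<forall>u v. \<theta> i u v = - \<theta> i v u)"
    and kernels: "(\<Inter>i\<in>{1..DIM('a) - 1}. form_kernel (\<theta> i)) = {0}"
    and cocycle: "\<forall>i\<in>{1..DIM('a) - 1}. \<forall>u v w.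
        \<theta> i (br u v) w + \<theta> i (br v w) u + \<theta> i (br w u) v = 0"
    and vanish: "\<forall>i\<in>{1..DIM('a) - 1}. \<forall>u\<in>h. \<forall>v\<in>h. \<theta> i u v = 0"
    unfolding k_symplectic_structure_def by blast+
  have lie: "lie_algebra br"
    using assms(1) unfolding quadratic_lie_def by simp
  have "subspace h"
    using sub unfolding lie_subalgebra_def by simp
  then obtain e c where coord: "\<And>x. x - c x *\<^sub>R e \<in> h"
    using hyperplane_coordinate codim_one_symplectic_hyperplane[OF S] by blast
  have "br u v = 0" if "u \<in> h" "v \<in> h" for u v
  proof (rule nilpotent_lie_bracket_in_span_zero[OF lie assms(2)])
    show "br u v = (- c (br e v)) *\<^sub>R u + c (br e u) *\<^sub>R v"
      using symplectic_forms_bracket_on_hyperplane[OF lie sub coord forms[rule_format]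
          cocycle[rule_format] vanish[THEN bspec] kernels that]
      by simp
  qed
  then show ?thesis
    using quadratic_lie_abelian_hyperplane[OF assms(1) coord] by blast
qed

end
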